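(* Let $b\in\mathbb{C}$ and let $\operatorname{ulog}_b(x):=M(0;1;b;x)$, and put $u(x)=e^{\operatorname{ulog}_b(x)}$ and $u^{b}:=e^{b\,\operatorname{ulog}_b(x)}$. Then $u=1+x\,u^{b}$ and, on the disc of convergence of $M(0;1;b;x)$, at every $x$ with $b+(1-b)u(x)\neq0$, $$\frac{d}{dx}\operatorname{ulog}_b(x)=\frac{u(x)^{b}}{b+(1-b)\,u(x)}.$$
   Context: For $m,a,b\in\mathbb{C}$ the master series is the power series $M(m;a;b;x)=m+x+\sum_{\ell\ge 2}\frac{x^\ell}{\ell!}\prod_{\gamma=1}^{\ell-1}(m-a\gamma+b\ell)$. The $b$-logarithm $\operatorname{ulog}_b(x)=M(0;1;b;x)$ is the solution of $y=\ln(1+xe^{by})$ with $y(0)=0$. *)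

theory Defs
  imports "HOL-Analysis.Analysis"
begin

definition master_coeff :: "complex \<Rightarrow> complex \<Rightarrow> complex \<Rightarrow> nat \<Rightarrow> complex" where
  "master_coeff m a b n =
     (if n = 0 then m
      else if n = 1 then 1
      else (\<Prod>g=1..n-1. m - a * of_nat g + b * of_nat n) / of_nat (fact n))"

text \<open>The master series as a function (sum of the power series; meaningful on its disc of convergence).\<close>
definition master :: "complex \<Rightarrow> complex \<Rightarrow> complex \<Rightarrow> complex \<Rightarrow> complex" where
  "master m a b x = (\<Sum>n. master_coeff m a b n * x ^ n)"

definition ulog :: "complex \<Rightarrow> complex \<Rightarrow> complex" where
  "ulog b x = master 0 1 b x"

end

theory Submission
  imports Defs "HOL-Complex_Analysis.Complex_Analysis"
begin

text \<open>By Lagrange inversion the coefficients of \<open>ulog\<^sub>b\<close> are those of \<open>ln (1 + W)\<close>, where \<open>W\<close> is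
  the compositional inverse of \<open>x / (1 + x)^b\<close>: both have \<open>n\<close>-th coefficient
  \<open>[x^(n-1)] (1 + x)^(nb-1) / n = binom(nb - 1, n - 1) / n\<close>.
  Formally, then, \<open>exp (ulog\<^sub>b) = 1 + W\<close> and \<open>exp (b ulog\<^sub>b) = (1 + W)^b\<close> (each pair solves
  the same linear ODE), and \<open>W = x (1 + W)^b\<close> becomes \<open>u = 1 + x u^b\<close>. This identity of power
  series holds for the analytic functions near 0, hence on the whole disc of convergence by
  analytic continuation, and implicit differentiation of \<open>u = 1 + x u^b\<close> gives the derivative.\<close>

lemma fps_deriv_mult_nth_cong:
  fixes H T P :: "'a::comm_ring_1 fps"
  assumes "\<And>j. j \<le> n \<Longrightarrow> H $ j = T $ j" and "n \<ge> 1"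
  shows "(fps_deriv H * P) $ (n - 1) = (fps_deriv T * P) $ (n - 1)"
  unfolding fps_mult_nth by (rule sum.cong) (use assms in auto)

lemma lagrange_inversion_power_coeff:
  fixes \<phi> :: "'a::field_char_0 fps"
  assumes \<phi>0: "\<phi> $ 0 = 1" and "k \<le> n" and "n \<ge> 1"
  shows "(fps_deriv ((fps_X * inverse \<phi>) ^ k) * \<phi> ^ n) $ (n - 1) = (if k = n then of_nat n else 0)"
proof (cases "k = 0")
  case True
  then show ?thesis using \<open>n \<ge> 1\<close> by simp
next
  case False
  define \<psi> where "\<psi> = inverse \<phi>"
  define m where "m = n - k"
  have n: "n = k + m" using \<open>k \<le> n\<close> m_def by simp
  have \<psi>\<phi>: "\<psi> * \<phi> = 1" unfolding \<psi>_def using \<phi>0 by (simp add: inverse_mult_eq_1)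
  have \<psi>\<phi>_power: "\<psi> ^ j * \<phi> ^ j = 1" for j by (metis \<psi>\<phi> power_mult_distrib power_one)
  have d\<psi>: "fps_deriv \<psi> = - fps_deriv \<phi> * \<psi> ^ 2"
    unfolding \<psi>_def using \<phi>0 by (simp add: fps_inverse_deriv)
  have "fps_deriv ((fps_X * \<psi>) ^ k) * \<phi> ^ n
      = fps_X ^ (k - 1) * (fps_const (of_nat k) * \<phi> ^ m)
        + fps_X ^ k * (- (fps_const (of_nat k) * fps_deriv \<phi> * (\<psi> * \<phi> ^ m)))"
  proof -
    obtain k' where k': "k = Suc k'" using False not0_implies_Suc by blast
    have "\<psi> ^ k * \<phi> ^ n = \<phi> ^ m"
      using \<psi>\<phi>_power[of k] n by (simp add: power_add mult.assoc[symmetric])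
    moreover have "\<psi> ^ 2 * \<psi> ^ (k - 1) * \<phi> ^ n = \<psi> * \<phi> ^ m"
      using \<psi>\<phi>_power[of k] n unfolding k' by (simp add: power2_eq_square power_add algebra_simps)
    ultimately show ?thesis
      by (simp add: power_mult_distrib fps_deriv_power d\<psi> algebra_simps)
  qed
  moreover have "(fps_X ^ (k - 1) * (fps_const (of_nat k) * \<phi> ^ m)) $ (n - 1) = of_nat k * (\<phi> ^ m) $ m"
    using False n by (simp add: fps_X_power_mult_nth)
  moreover have "(fps_X ^ k * (- (fps_const (of_nat k) * fps_deriv \<phi> * (\<psi> * \<phi> ^ m)))) $ (n - 1)
        = (if m = 0 then 0 else - of_nat k * (\<phi> ^ m) $ m)"
  proof (cases "m = 0")
    case True
    then show ?thesis using n False by (simp add: fps_X_power_mult_nth)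
  next
    case False
    have "\<psi> * \<phi> ^ m = \<phi> ^ (m - 1)"
      using False \<psi>\<phi> by (metis (no_types) mult.assoc mult_1 power_eq_if)
    moreover have "(fps_deriv \<phi> * \<phi> ^ (m - 1)) $ (m - 1) = (\<phi> ^ m) $ m"
    proof -
      have "fps_deriv (\<phi> ^ m) = fps_const (of_nat m) * (fps_deriv \<phi> * \<phi> ^ (m - 1))"
        by (simp add: fps_deriv_power mult.assoc)
      then have "of_nat m * (fps_deriv \<phi> * \<phi> ^ (m - 1)) $ (m - 1) = fps_deriv (\<phi> ^ m) $ (m - 1)"
        by simp
      also have "\<dots> = of_nat m * (\<phi> ^ m) $ m" using False by simp
      finally show ?thesis using False by simp
    qed
    ultimately show ?thesis using n \<open>k \<noteq> 0\<close> False
      by (simp add: fps_X_power_mult_nth mult.assoc)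
  qed
  ultimately show ?thesis unfolding \<psi>_def using n by auto
qed

theorem lagrange_inversion:
  fixes \<phi> H :: "'a::field_char_0 fps"
  assumes \<phi>0: "\<phi> $ 0 = 1" and "H $ 0 = 0" and "n \<ge> 1"
  shows "of_nat n * (H oo fps_inv (fps_X * inverse \<phi>)) $ n = (fps_deriv H * \<phi> ^ n) $ (n - 1)"
proof -
  define g where "g = fps_X * inverse \<phi>"
  define K where "K = H oo fps_inv g"
  have g0: "g $ 0 = 0" and g1: "g $ 1 = 1" unfolding g_def using \<phi>0 by simp_all
  have "K oo g = H oo (fps_inv g oo g)"
    unfolding K_def by (simp add: fps_compose_assoc g0 fps_inv_def)
  also have "fps_inv g oo g = fps_X" using fps_inv[OF g0] g1 by simp
  finally have Kg: "K oo g = H" by simp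
  have g_power_nth: "(g ^ k) $ j = 0" if "j < k" for j k
    unfolding g_def power_mult_distrib using that by (simp add: fps_X_power_mult_nth)
  \<comment> \<open>Only the terms of \<open>H = \<Sum>\<^sub>k K\<^sub>k g\<^sup>k\<close> with \<open>k \<le> n\<close> contribute to the coefficient.\<close>
  define T where "T = (\<Sum>k=0..n. fps_const (K $ k) * g ^ k)"
  have "H $ j = T $ j" if "j \<le> n" for j
  proof -
    have "T $ j = (\<Sum>k=0..n. K $ k * (g ^ k) $ j)" unfolding T_def fps_sum_nth by simp
    also have "\<dots> = (\<Sum>k=0..j. K $ k * (g ^ k) $ j)"
      by (rule sum.mono_neutral_right) (use that g_power_nth in auto)
    also have "\<dots> = H $ j" using Kg by (auto simp: fps_compose_nth)
    finally show ?thesis by simp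
  qed
  then have "(fps_deriv H * \<phi> ^ n) $ (n - 1) = (fps_deriv T * \<phi> ^ n) $ (n - 1)"
    using \<open>n \<ge> 1\<close> by (rule fps_deriv_mult_nth_cong)
  also have "\<dots> = (\<Sum>k=0..n. K $ k * (fps_deriv (g ^ k) * \<phi> ^ n) $ (n - 1))"
    unfolding T_def fps_deriv_sum sum_distrib_right fps_sum_nth by (simp add: mult.assoc)
  also have "\<dots> = (\<Sum>k=0..n. if k = n then K $ k * of_nat n else 0)"
    unfolding g_def using lagrange_inversion_power_coeff[OF \<phi>0 _ \<open>n \<ge> 1\<close>]
    by (intro sum.cong) auto
  finally show ?thesis unfolding K_def g_def by simp
qed

lemma fps_linear_ode_unique:
  fixes f g a :: "'a::field_char_0 fps"
  assumes "fps_deriv f = a * f" "fps_deriv g = a * g" "f $ 0 = 1" "g $ 0 = 1"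
  shows "f = g"
proof -
  define q where "q = f * inverse g"
  have gi: "inverse g * g = 1" using assms(4) by (simp add: inverse_mult_eq_1)
  have "fps_deriv q = fps_deriv f * inverse g + f * (- fps_deriv g * (inverse g)^2)"
    unfolding q_def using assms(4) by (simp add: fps_inverse_deriv)
  also have "\<dots> = a * f * inverse g - a * f * (inverse g * g) * inverse g"
    unfolding assms(1,2) by (simp add: power2_eq_square algebra_simps)
  also have "\<dots> = 0" unfolding gi by simp
  finally have "q = fps_const (q $ 0)" by simp
  also have "q $ 0 = 1" unfolding q_def using assms(3,4) by simp
  finally have "q = 1" by simp
  have "f = q * g" unfolding q_def by (simp add: mult.assoc gi)
  then show ?thesis using \<open>q = 1\<close> by simp
qed

lemma master_coeff_ulog_eq_gchoose:
  assumes "n \<ge> 1"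
  shows "master_coeff 0 1 b n = ((of_nat n * b - 1) gchoose (n - 1)) / of_nat n"
proof (cases "n = 1")
  case True
  then show ?thesis by (simp add: master_coeff_def)
next
  case False
  then obtain j where n: "n = Suc (Suc j)" using assms
    by (metis One_nat_def Suc_le_D le_SucE not0_implies_Suc)
  have "(\<Prod>g=1..n-1. 0 - 1 * of_nat g + b * of_nat n) = (\<Prod>i=0..j. (of_nat n * b - 1) - of_nat i)"
    unfolding n using prod.shift_bounds_cl_Suc_ivl[of "\<lambda>g. 0 - 1 * of_nat g + b * of_nat (Suc (Suc j))" 0 j]
    by (simp add: algebra_simps)
  moreover have "(of_nat n * b - 1) gchoose (n - 1) = (\<Prod>i=0..j. (of_nat n * b - 1) - of_nat i) / fact (Suc j)"
    unfolding gbinomial_prod_rev n by (simp add: atLeastLessThanSuc_atLeastAtMost)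
  ultimately show ?thesis unfolding master_coeff_def using n
    by (simp add: field_simps fact_Suc[of "Suc j"])
qed

\<comment> \<open>The formal solution of \<open>W = x (1 + W)^b\<close>; the function \<open>u\<close> of the theorem is \<open>1 + W\<close>.\<close>
definition inv_X_div_binomial :: "'a::field_char_0 \<Rightarrow> 'a fps" where
  "inv_X_div_binomial b = fps_inv (fps_X * inverse (fps_binomial b))"

lemma inv_X_div_binomial_nth_0 [simp]: "inv_X_div_binomial b $ 0 = 0"
  by (simp add: inv_X_div_binomial_def fps_inv_def)

lemma inv_X_div_binomial_fixpoint:
  "inv_X_div_binomial b = fps_X * (fps_binomial b oo inv_X_div_binomial b)"
proof -
  define g where "g = fps_X * inverse (fps_binomial b)"
  define W where "W = inv_X_div_binomial b"
  have "W * inverse (fps_binomial b oo W) = g oo W"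
    unfolding g_def W_def by (simp add: fps_compose_mult_distrib fps_inverse_compose)
  also have "\<dots> = fps_X"
    unfolding g_def W_def inv_X_div_binomial_def by (simp add: fps_inv_right)
  finally have "W * (inverse (fps_binomial b oo W) * (fps_binomial b oo W)) = fps_X * (fps_binomial b oo W)"
    by (simp add: mult.assoc[symmetric])
  then show ?thesis unfolding W_def by (simp add: inverse_mult_eq_1)
qed

lemma ulog_fps_eq_ln_compose:
  "Abs_fps (master_coeff 0 1 b) = fps_ln 1 oo inv_X_div_binomial b"
proof (rule fps_ext)
  fix n
  show "Abs_fps (master_coeff 0 1 b) $ n = (fps_ln 1 oo inv_X_div_binomial b) $ n"
  proof (cases "n = 0")
    case True
    then show ?thesis by (simp add: master_coeff_def)
  next
    case False
    then have "n \<ge> 1" by simp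
    have "fps_deriv (fps_ln 1) * fps_binomial b ^ n = fps_binomial (of_nat n * b - 1)"
      unfolding fps_ln_deriv fps_binomial_power fps_binomial_minus_one[symmetric]
      by (simp add: fps_binomial_add_mult[symmetric])
    then have "of_nat n * (fps_ln 1 oo inv_X_div_binomial b) $ n = (of_nat n * b - 1) gchoose (n - 1)"
      unfolding inv_X_div_binomial_def using lagrange_inversion[OF _ _ \<open>n \<ge> 1\<close>, of "fps_binomial b" "fps_ln 1"]
      by simp
    then show ?thesis using \<open>n \<ge> 1\<close> by (simp add: master_coeff_ulog_eq_gchoose field_simps)
  qed
qed

lemma fps_deriv_ln_compose:
  fixes W :: "'a::field_char_0 fps"
  assumes "W $ 0 = 0"
  shows "fps_deriv (fps_ln 1 oo W) = inverse (1 + W) * fps_deriv W"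
proof -
  have "inverse (1 + fps_X) oo W = inverse (1 + W)"
    using fps_inverse_compose[OF assms, of "1 + fps_X"] assms by (simp add: fps_compose_add_distrib)
  then show ?thesis by (simp add: fps_compose_deriv[OF assms] fps_ln_deriv)
qed

lemma fps_deriv_binomial_compose:
  fixes W :: "'a::field_char_0 fps"
  assumes "W $ 0 = 0"
  shows "fps_deriv (fps_binomial b oo W) = fps_const b * (fps_binomial b oo W) * inverse (1 + W) * fps_deriv W"
proof -
  have "inverse (1 + fps_X) oo W = inverse (1 + W)"
    using fps_inverse_compose[OF assms, of "1 + fps_X"] assms by (simp add: fps_compose_add_distrib)
  then show ?thesis
    using assms by (simp add: fps_compose_deriv fps_binomial_deriv fps_divide_unit fps_compose_mult_distrib)
qed

lemma ulog_fps_exp_equation: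
  fixes b :: complex and E1 Eb :: "complex fps"
  defines "Y \<equiv> Abs_fps (master_coeff 0 1 b)"
  assumes E1: "fps_deriv E1 = fps_deriv Y * E1" "E1 $ 0 = 1"
    and Eb: "fps_deriv Eb = fps_const b * fps_deriv Y * Eb" "Eb $ 0 = 1"
  shows "E1 = 1 + fps_X * Eb"
proof -
  define W where "W = inv_X_div_binomial b"
  have W0: "W $ 0 = 0" unfolding W_def by simp
  have dY: "fps_deriv Y = inverse (1 + W) * fps_deriv W"
    unfolding Y_def W_def ulog_fps_eq_ln_compose by (simp add: fps_deriv_ln_compose)
  have W_cancel: "inverse (1 + W) * (1 + W) = 1" using W0 by (simp add: inverse_mult_eq_1)
  have "E1 = 1 + W"
  proof (rule fps_linear_ode_unique[OF E1(1)])
    show "fps_deriv (1 + W) = fps_deriv Y * (1 + W)"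
      unfolding dY using W_cancel by (simp add: algebra_simps)
  qed (use E1 W0 in simp_all)
  moreover have "Eb = fps_binomial b oo W"
  proof (rule fps_linear_ode_unique[OF Eb(1)])
    show "fps_deriv (fps_binomial b oo W) = fps_const b * fps_deriv Y * (fps_binomial b oo W)"
      unfolding dY fps_deriv_binomial_compose[OF W0] by (simp add: algebra_simps)
  qed (use Eb W0 in simp_all)
  ultimately show ?thesis
    using inv_X_div_binomial_fixpoint[of b] unfolding W_def by simp
qed

lemma has_fps_expansion_unique:
  fixes f :: "complex \<Rightarrow> complex"
  assumes "f has_fps_expansion F" "f has_fps_expansion G"
  shows "F = G"
  using fps_nth_fps_expansion[OF assms(1)] fps_nth_fps_expansion[OF assms(2)]
  by (intro fps_ext) simp

lemma has_fps_expansion_exp_eval_fps: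
  fixes Y :: "complex fps" and c :: complex
  assumes "fps_conv_radius Y > 0"
  obtains E :: "complex fps" where "(\<lambda>z. exp (c * eval_fps Y z)) has_fps_expansion E"
    and "fps_deriv E = fps_const c * fps_deriv Y * E" and "E $ 0 = exp (c * Y $ 0)"
proof -
  define e where "e = (\<lambda>z. exp (c * eval_fps Y z))"
  define D where "D = eball (0::complex) (fps_conv_radius Y)"
  have "0 \<in> D" unfolding D_def using assms by (simp add: zero_ereal_def)
  moreover have "e holomorphic_on D" unfolding e_def D_def by (intro holomorphic_intros) auto
  ultimately have e: "e has_fps_expansion fps_expansion e 0"
    unfolding D_def by (intro has_fps_expansion_fps_expansion) auto
  have "deriv e z = c * deriv (eval_fps Y) z * e z" if "z \<in> D" for z
  proof -
    have z: "norm z < fps_conv_radius Y" using that by (simp add: D_def)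
    then have dY: "(eval_fps Y has_field_derivative eval_fps (fps_deriv Y) z) (at z)"
      by (rule has_field_derivative_eval_fps)
    have "(e has_field_derivative e z * (c * eval_fps (fps_deriv Y) z)) (at z)"
      unfolding e_def using z by (auto intro!: derivative_eq_intros)
    then show ?thesis using dY by (simp add: DERIV_imp_deriv algebra_simps)
  qed
  then have "eventually (\<lambda>z. deriv e z = c * deriv (eval_fps Y) z * e z) (nhds 0)"
    using eventually_nhds_in_open[of D 0] \<open>0 \<in> D\<close> by (auto simp: D_def elim: eventually_mono)
  moreover have "(\<lambda>z. c * deriv (eval_fps Y) z * e z) has_fps_expansion fps_const c * fps_deriv Y * fps_expansion e 0"
    using assms e by (intro fps_expansion_intros eval_fps_has_fps_expansion)
  ultimately have "deriv e has_fps_expansion fps_const c * fps_deriv Y * fps_expansion e 0"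
    by (simp add: has_fps_expansion_cong)
  then have "fps_deriv (fps_expansion e 0) = fps_const c * fps_deriv Y * fps_expansion e 0"
    using has_fps_expansion_deriv[OF e] has_fps_expansion_unique by blast
  moreover have "fps_expansion e 0 $ 0 = exp (c * Y $ 0)"
    using fps_nth_fps_expansion[OF e, of 0] by (simp add: e_def eval_fps_at_0)
  ultimately show ?thesis using that[folded e_def, OF e] by blast
qed

lemma ulog_eq_eval_fps: "ulog b = eval_fps (Abs_fps (master_coeff 0 1 b))"
  by (simp add: fun_eq_iff ulog_def master_def eval_fps_def)

lemma ulog_functional_equation:
  assumes "ereal (norm z) < conv_radius (master_coeff 0 1 b)"
  shows "exp (ulog b z) = 1 + z * exp (b * ulog b z)"
proof -
  define Y where "Y = Abs_fps (master_coeff 0 1 b)"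
  define D where "D = eball (0::complex) (fps_conv_radius Y)"
  have "z \<in> D" using assms by (simp add: D_def Y_def fps_conv_radius_def)
  then have "fps_conv_radius Y > 0" unfolding D_def
    by (auto simp: zero_ereal_def intro: le_less_trans[of _ "ereal (norm z)"])
  then obtain E1 Eb :: "complex fps"
    where E1: "(\<lambda>z. exp (1 * eval_fps Y z)) has_fps_expansion E1"
      "fps_deriv E1 = fps_const 1 * fps_deriv Y * E1" "E1 $ 0 = exp (1 * Y $ 0)"
    and Eb: "(\<lambda>z. exp (b * eval_fps Y z)) has_fps_expansion Eb"
      "fps_deriv Eb = fps_const b * fps_deriv Y * Eb" "Eb $ 0 = exp (b * Y $ 0)"
    by (metis has_fps_expansion_exp_eval_fps)
  have "Y $ 0 = 0" unfolding Y_def by (simp add: master_coeff_def)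
  then have "E1 = 1 + fps_X * Eb"
    using E1 Eb unfolding Y_def by (intro ulog_fps_exp_equation[where b = b]) simp_all
  define G where "G = (\<lambda>z. exp (eval_fps Y z) - 1 - z * exp (b * eval_fps Y z))"
  have "G has_fps_expansion E1 - 1 - fps_X * Eb"
    unfolding G_def using E1(1) Eb(1) by (intro fps_expansion_intros) simp_all
  then have "G has_fps_expansion 0" using \<open>E1 = 1 + fps_X * Eb\<close> by simp
  moreover have "G holomorphic_on D" unfolding G_def D_def by (intro holomorphic_intros) auto
  ultimately have "G z = 0"
    using \<open>0 < fps_conv_radius Y\<close> \<open>z \<in> D\<close>
    by (intro has_fps_expansion_0_analytic_continuation[of G D]) (auto simp: D_def zero_ereal_def)
  then show ?thesis unfolding G_def Y_def ulog_eq_eval_fps by (simp add: algebra_simps)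
qed

lemma derivative_of_exp_functional_equation:
  fixes y :: "complex \<Rightarrow> complex"
  assumes dy: "(y has_field_derivative y') (at x)" and "open S" "x \<in> S"
    and eq: "\<And>z. z \<in> S \<Longrightarrow> exp (y z) = 1 + z * exp (b * y z)"
  shows "y' * (b + (1 - b) * exp (y x)) = exp (b * y x)"
proof -
  have "((\<lambda>z. 1 + z * exp (b * y z)) has_field_derivative exp (y x) * y') (at x)"
    using DERIV_fun_exp[OF dy] \<open>open S\<close> \<open>x \<in> S\<close> eq
    by (rule has_field_derivative_transform_within_open)
  moreover have "((\<lambda>z. 1 + z * exp (b * y z)) has_field_derivative
      exp (b * y x) + x * (exp (b * y x) * (b * y'))) (at x)"
    using dy by (auto intro!: derivative_eq_intros)
  ultimately have "exp (y x) * y' = exp (b * y x) + x * exp (b * y x) * b * y'"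
    by (simp add: DERIV_unique mult.assoc)
  then show ?thesis using eq[OF \<open>x \<in> S\<close>] by (simp add: algebra_simps)
qed

theorem mainTheorem11:
  fixes b x :: complex
  assumes "ereal (norm x) < conv_radius (master_coeff 0 1 b)"
  shows "exp (ulog b x) = 1 + x * exp (b * ulog b x) \<and>
         (b + (1 - b) * exp (ulog b x) \<noteq> 0 \<longrightarrow>
           (ulog b has_field_derivative
              exp (b * ulog b x) / (b + (1 - b) * exp (ulog b x))) (at x))"
proof (intro conjI impI)
  define Y where "Y = Abs_fps (master_coeff 0 1 b)"
  define S where "S = eball (0::complex) (conv_radius (master_coeff 0 1 b))"
  have dy: "(ulog b has_field_derivative eval_fps (fps_deriv Y) x) (at x)"
    using assms has_field_derivative_eval_fps[of x Y]
    by (simp add: Y_def ulog_eq_eval_fps fps_conv_radius_def)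
  show "exp (ulog b x) = 1 + x * exp (b * ulog b x)"
    using assms by (rule ulog_functional_equation)
  assume "b + (1 - b) * exp (ulog b x) \<noteq> 0"
  moreover have "eval_fps (fps_deriv Y) x * (b + (1 - b) * exp (ulog b x)) = exp (b * ulog b x)"
    using dy by (rule derivative_of_exp_functional_equation[of _ _ _ S])
      (use assms in \<open>auto simp: S_def intro: ulog_functional_equation\<close>)
  ultimately have "exp (b * ulog b x) / (b + (1 - b) * exp (ulog b x)) = eval_fps (fps_deriv Y) x"
    by (metis nonzero_mult_div_cancel_right)
  with dy show "(ulog b has_field_derivative
      exp (b * ulog b x) / (b + (1 - b) * exp (ulog b x))) (at x)"
    by simp
qed

end
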